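(* Let $\Omega$ be a finite set, let $G \leq \mathrm{Sym}(\Omega)$ be semiprimitive and let $\Sigma$ be a non-trivial $G$-invariant partition of $\Omega$. Then (i) $D(G) \leq D(G^\Sigma)$; (ii) if $|\sigma| \geq |\Sigma|-1$ for all $\sigma \in \Sigma$, then $D(G)=2$.
   Context: For $G \leq \mathrm{Sym}(\Omega)$, the distinguishing number $D(G)$ is the least positive integer $k$ such that there is a partition of $\Omega$ into $k$ parts for which only the identity of $G$ stabilises every part setwise. A permutation group is semiprimitive if every normal subgroup is transitive or semiregular (semiregular: all point stabilisers trivial). A $G$-invariant partition $\Sigma$ is non-trivial if it has more than one part and not all parts are singletons; $G^\Sigma$ denotes the permutation group induced by $G$ on the set of parts $\Sigma$. *)

theory Defs
  imports "HOL-Combinatorics.Permutations"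
begin

definition perm_group :: "('a \<Rightarrow> 'a) set \<Rightarrow> 'a set \<Rightarrow> bool" where
  "perm_group G \<Omega> \<longleftrightarrow> id \<in> G \<and> (\<forall>g\<in>G. g permutes \<Omega>) \<and>
     (\<forall>g\<in>G. \<forall>h\<in>G. g \<circ> h \<in> G) \<and> (\<forall>g\<in>G. inv g \<in> G)"

definition normal_subgroup :: "('a \<Rightarrow> 'a) set \<Rightarrow> ('a \<Rightarrow> 'a) set \<Rightarrow> 'a set \<Rightarrow> bool" where
  "normal_subgroup N G \<Omega> \<longleftrightarrow> N \<subseteq> G \<and> perm_group N \<Omega> \<and>
     (\<forall>g\<in>G. \<forall>n\<in>N. g \<circ> n \<circ> inv g \<in> N)"

definition transitive_on :: "('a \<Rightarrow> 'a) set \<Rightarrow> 'a set \<Rightarrow> bool" where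
  "transitive_on N \<Omega> \<longleftrightarrow> (\<forall>x\<in>\<Omega>. \<forall>y\<in>\<Omega>. \<exists>n\<in>N. n x = y)"

definition semiregular_on :: "('a \<Rightarrow> 'a) set \<Rightarrow> 'a set \<Rightarrow> bool" where
  "semiregular_on N \<Omega> \<longleftrightarrow> (\<forall>x\<in>\<Omega>. \<forall>n\<in>N. n x = x \<longrightarrow> n = id)"

definition semiprimitive :: "('a \<Rightarrow> 'a) set \<Rightarrow> 'a set \<Rightarrow> bool" where
  "semiprimitive G \<Omega> \<longleftrightarrow> perm_group G \<Omega> \<and> transitive_on G \<Omega> \<and>
     (\<forall>N. normal_subgroup N G \<Omega> \<longrightarrow> transitive_on N \<Omega> \<or> semiregular_on N \<Omega>)"

definition is_partition :: "'a set set \<Rightarrow> 'a set \<Rightarrow> bool" where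
  "is_partition P \<Omega> \<longleftrightarrow> (\<forall>B\<in>P. B \<noteq> {}) \<and> \<Union>P = \<Omega> \<and>
     (\<forall>B\<in>P. \<forall>C\<in>P. B \<noteq> C \<longrightarrow> B \<inter> C = {})"

definition distinguishing_number :: "('a \<Rightarrow> 'a) set \<Rightarrow> 'a set \<Rightarrow> nat" where
  "distinguishing_number G \<Omega> = (LEAST k. k > 0 \<and> (\<exists>P. is_partition P \<Omega> \<and> card P = k \<and>
     (\<forall>g\<in>G. (\<forall>B\<in>P. g ` B = B) \<longrightarrow> g = id)))"

definition invariant_partition :: "('a \<Rightarrow> 'a) set \<Rightarrow> 'a set set \<Rightarrow> 'a set \<Rightarrow> bool" where
  "invariant_partition G \<Sigma> \<Omega> \<longleftrightarrow> is_partition \<Sigma> \<Omega> \<and> (\<forall>g\<in>G. \<forall>B\<in>\<Sigma>. g ` B \<in> \<Sigma>)"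

definition nontrivial_partition :: "'a set set \<Rightarrow> bool" where
  "nontrivial_partition \<Sigma> \<longleftrightarrow> card \<Sigma> > 1 \<and> (\<exists>B\<in>\<Sigma>. card B \<noteq> 1)"

definition induced_group :: "('a \<Rightarrow> 'a) set \<Rightarrow> 'a set set \<Rightarrow> ('a set \<Rightarrow> 'a set) set" where
  "induced_group G \<Sigma> = (\<lambda>g. \<lambda>B. if B \<in> \<Sigma> then g ` B else B) ` G"

end

theory Submission
  imports Defs
begin

text \<open>The kernel of the action of G on the blocks is a normal subgroup, intransitive because there
  are at least two blocks, hence semiregular: an element of G fixing every block and one point is
  the identity.

  (i) Lift a distinguishing colouring of \<Sigma> to \<Omega>, but give one point \<alpha> of a block with at least
  two points the colour of another class. An element preserving this colouring must fix \<alpha>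
  (otherwise the other points of \<alpha>'s block would change colour), hence preserves the colours of
  all blocks, hence fixes every block, and so is the identity.

  (ii) Number the blocks 0, ..., m - 1 and choose X meeting block i in exactly i points, which the
  block sizes allow. An element stabilising X preserves these intersection sizes, so fixes every
  block and the unique point of X in block 1.\<close>

lemma perm_group_permutes: "perm_group G \<Omega> \<Longrightarrow> g \<in> G \<Longrightarrow> g permutes \<Omega>"
  unfolding perm_group_def by blast

lemma perm_group_inv_closed: "perm_group G \<Omega> \<Longrightarrow> g \<in> G \<Longrightarrow> inv g \<in> G"
  unfolding perm_group_def by blast

lemma perm_group_comp_closed: "perm_group G \<Omega> \<Longrightarrow> g \<in> G \<Longrightarrow> h \<in> G \<Longrightarrow> g \<circ> h \<in> G"
  unfolding perm_group_def by blast

lemma perm_group_inj: "perm_group G \<Omega> \<Longrightarrow> g \<in> G \<Longrightarrow> inj g"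
  using perm_group_permutes permutes_inj by blast

lemma perm_group_surj: "perm_group G \<Omega> \<Longrightarrow> g \<in> G \<Longrightarrow> surj g"
  using perm_group_permutes permutes_surj by blast

lemma is_partition_eqI:
  assumes "is_partition P \<Omega>" and "B \<in> P" and "C \<in> P" and "x \<in> B" and "x \<in> C"
  shows "B = C"
  using assms unfolding is_partition_def by blast

definition block_kernel :: "('a \<Rightarrow> 'a) set \<Rightarrow> 'a set set \<Rightarrow> ('a \<Rightarrow> 'a) set" where
  "block_kernel G \<Sigma> = {g \<in> G. \<forall>B\<in>\<Sigma>. g ` B = B}"

lemma normal_subgroup_block_kernel:
  assumes pg: "perm_group G \<Omega>" and ip: "invariant_partition G \<Sigma> \<Omega>"
  shows "normal_subgroup (block_kernel G \<Sigma>) G \<Omega>"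
proof -
  let ?K = "block_kernel G \<Sigma>"
  have inv_fixes: "inv h ` B = B" if "h \<in> G" "h ` B = B" for h B
    using image_inv_f_f[OF perm_group_inj[OF pg \<open>h \<in> G\<close>], of B] that(2) by simp
  have conj_fixes: "(h \<circ> n \<circ> inv h) ` B = B" if h: "h \<in> G" and n: "n \<in> ?K" and B: "B \<in> \<Sigma>" for h n B
  proof -
    have "inv h ` B \<in> \<Sigma>"
      using ip perm_group_inv_closed[OF pg h] B unfolding invariant_partition_def by blast
    then have "n ` (inv h ` B) = inv h ` B"
      using n unfolding block_kernel_def by blast
    have "(h \<circ> n \<circ> inv h) ` B = h ` (n ` (inv h ` B))"
      by (simp add: image_comp)
    also have "\<dots> = h ` (inv h ` B)"
      using \<open>n ` (inv h ` B) = inv h ` B\<close> by simp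
    also have "\<dots> = B"
      using image_f_inv_f[OF perm_group_surj[OF pg h]] .
    finally show ?thesis .
  qed
  have "perm_group ?K \<Omega>"
    unfolding perm_group_def
  proof (intro conjI ballI)
    show "id \<in> ?K"
      using pg unfolding perm_group_def block_kernel_def by simp
  next
    fix h assume "h \<in> ?K"
    then show "h permutes \<Omega>" "inv h \<in> ?K"
      using pg inv_fixes unfolding perm_group_def block_kernel_def by auto
  next
    fix h k assume "h \<in> ?K" "k \<in> ?K"
    moreover have "(h \<circ> k) ` B = h ` k ` B" for B
      by (rule image_comp[symmetric])
    ultimately show "h \<circ> k \<in> ?K"
      using perm_group_comp_closed[OF pg] unfolding block_kernel_def by auto
  qed
  moreover have "h \<circ> n \<circ> inv h \<in> ?K" if "h \<in> G" "n \<in> ?K" for h n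
    using conj_fixes[OF that] that perm_group_comp_closed[OF pg] perm_group_inv_closed[OF pg]
    unfolding block_kernel_def by auto
  moreover have "?K \<subseteq> G"
    unfolding block_kernel_def by blast
  ultimately show ?thesis
    unfolding normal_subgroup_def by blast
qed

lemma two_points_in_distinct_blocks:
  assumes "is_partition \<Sigma> \<Omega>" and "card \<Sigma> > 1"
  obtains B C x y where "B \<in> \<Sigma>" "C \<in> \<Sigma>" "B \<noteq> C" "x \<in> B" "y \<in> C"
proof -
  obtain B C where "B \<in> \<Sigma>" "C \<in> \<Sigma>" "B \<noteq> C"
    using assms(2) by (metis One_nat_def card.infinite card_le_Suc0_iff_eq not_less less_nat_zero_code)
  moreover obtain x y where "x \<in> B" "y \<in> C"
    using assms(1) calculation unfolding is_partition_def by blast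
  ultimately show thesis using that by blast
qed

lemma not_transitive_if_fixes_blocks:
  assumes "is_partition \<Sigma> \<Omega>" and "card \<Sigma> > 1" and "\<forall>n\<in>N. \<forall>B\<in>\<Sigma>. n ` B = B"
  shows "\<not> transitive_on N \<Omega>"
proof
  assume "transitive_on N \<Omega>"
  obtain B C x y where bc: "B \<in> \<Sigma>" "C \<in> \<Sigma>" "B \<noteq> C" "x \<in> B" "y \<in> C"
    using two_points_in_distinct_blocks[OF assms(1,2)] .
  then obtain n where "n \<in> N" "n x = y"
    using \<open>transitive_on N \<Omega>\<close> assms(1) unfolding transitive_on_def is_partition_def by blast
  then have "y \<in> B"
    using assms(3) bc by blast
  then show False
    using is_partition_eqI[OF assms(1) bc(1,2) _ bc(5)] bc(3) by blast
qed

lemma semiprimitive_fixes_blocks_and_point_eq_id: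
  assumes sp: "semiprimitive G \<Omega>" and ip: "invariant_partition G \<Sigma> \<Omega>" and "card \<Sigma> > 1"
    and "g \<in> G" and "\<forall>B\<in>\<Sigma>. g ` B = B" and "x \<in> \<Omega>" and "g x = x"
  shows "g = id"
proof -
  have "normal_subgroup (block_kernel G \<Sigma>) G \<Omega>"
    using normal_subgroup_block_kernel sp ip unfolding semiprimitive_def by blast
  moreover have "\<not> transitive_on (block_kernel G \<Sigma>) \<Omega>"
    using ip \<open>card \<Sigma> > 1\<close> not_transitive_if_fixes_blocks[of \<Sigma> \<Omega> "block_kernel G \<Sigma>"]
    unfolding invariant_partition_def block_kernel_def by blast
  ultimately have "semiregular_on (block_kernel G \<Sigma>) \<Omega>"
    using sp unfolding semiprimitive_def by blast
  then show ?thesis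
    using assms(4-) unfolding semiregular_on_def block_kernel_def by blast
qed

lemma transitive_moves_block:
  assumes "transitive_on G \<Omega>" and "is_partition \<Sigma> \<Omega>" and "card \<Sigma> > 1"
  obtains g B where "g \<in> G" "B \<in> \<Sigma>" "g ` B \<noteq> B"
  using not_transitive_if_fixes_blocks[OF assms(2,3), of G] assms(1) that by blast

definition distinguishes :: "('a \<Rightarrow> 'a) set \<Rightarrow> 'a set set \<Rightarrow> bool" where
  "distinguishes G P \<longleftrightarrow> (\<forall>g\<in>G. (\<forall>B\<in>P. g ` B = B) \<longrightarrow> g = id)"

lemma distinguishing_number_altdef:
  "distinguishing_number G \<Omega> =
     (LEAST k. k > 0 \<and> (\<exists>P. is_partition P \<Omega> \<and> card P = k \<and> distinguishes G P))"
  unfolding distinguishing_number_def distinguishes_def ..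

lemma distinguishing_number_le:
  assumes "is_partition P \<Omega>" and "card P > 0" and "distinguishes G P"
  shows "distinguishing_number G \<Omega> \<le> card P"
  unfolding distinguishing_number_altdef by (rule Least_le) (use assms in blast)

lemma distinguishing_number_attained:
  assumes "is_partition P \<Omega>" and "card P > 0" and "distinguishes G P"
  obtains Q where "is_partition Q \<Omega>" "card Q = distinguishing_number G \<Omega>"
    "distinguishing_number G \<Omega> > 0" "distinguishes G Q"
proof -
  have "\<exists>k. k > 0 \<and> (\<exists>P. is_partition P \<Omega> \<and> card P = k \<and> distinguishes G P)"
    using assms by blast
  from LeastI_ex[OF this] show thesis
    using that unfolding distinguishing_number_altdef by blast
qed

lemma distinguishing_number_ge_2:
  assumes "is_partition P \<Omega>" and "card P > 0" and "distinguishes G P"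
    and "\<forall>h\<in>G. h ` \<Omega> = \<Omega>" and "g \<in> G" and "g \<noteq> id"
  shows "2 \<le> distinguishing_number G \<Omega>"
proof -
  obtain Q where Q: "is_partition Q \<Omega>" "card Q = distinguishing_number G \<Omega>"
    "distinguishing_number G \<Omega> > 0" "distinguishes G Q"
    using distinguishing_number_attained[OF assms(1-3)] .
  have "card Q \<noteq> 1"
  proof
    assume "card Q = 1"
    then obtain Y where "Q = {Y}" by (rule card_1_singletonE)
    with Q(1) have "Q = {\<Omega>}" unfolding is_partition_def by auto
    then show False
      using Q(4) assms(4-6) unfolding distinguishes_def by blast
  qed
  with Q(2,3) show ?thesis by linarith
qed

definition colour_classes :: "('a \<Rightarrow> 'c) \<Rightarrow> 'a set \<Rightarrow> 'a set set" where
  "colour_classes c \<Omega> = (\<lambda>i. {x \<in> \<Omega>. c x = i}) ` c ` \<Omega>"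

definition distinguishing_colouring :: "('a \<Rightarrow> 'a) set \<Rightarrow> 'a set \<Rightarrow> ('a \<Rightarrow> 'c) \<Rightarrow> bool" where
  "distinguishing_colouring G \<Omega> c \<longleftrightarrow> (\<forall>g\<in>G. (\<forall>x\<in>\<Omega>. c (g x) = c x) \<longrightarrow> g = id)"

lemma is_partition_colour_classes: "is_partition (colour_classes c \<Omega>) \<Omega>"
  unfolding is_partition_def colour_classes_def by auto

lemma card_colour_classes: "card (colour_classes c \<Omega>) = card (c ` \<Omega>)"
  unfolding colour_classes_def by (rule card_image) (auto simp: inj_on_def)

lemma distinguishes_colour_classes:
  assumes "distinguishing_colouring G \<Omega> c"
  shows "distinguishes G (colour_classes c \<Omega>)"
  unfolding distinguishes_def
proof (intro ballI impI)
  fix g assume "g \<in> G" and stable: "\<forall>B\<in>colour_classes c \<Omega>. g ` B = B"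
  have "c (g x) = c x" if "x \<in> \<Omega>" for x
  proof -
    have "{y \<in> \<Omega>. c y = c x} \<in> colour_classes c \<Omega>"
      using that unfolding colour_classes_def by blast
    then have class_stable: "g ` {y \<in> \<Omega>. c y = c x} = {y \<in> \<Omega>. c y = c x}"
      by (rule bspec[OF stable])
    have "g x \<in> g ` {y \<in> \<Omega>. c y = c x}"
      using that by simp
    then show ?thesis
      unfolding class_stable by simp
  qed
  then show "g = id"
    using assms \<open>g \<in> G\<close> unfolding distinguishing_colouring_def by blast
qed

lemma distinguishing_number_le_card_colours:
  assumes "\<Omega> \<noteq> {}" and "finite (c ` \<Omega>)" and "distinguishing_colouring G \<Omega> c"
  shows "distinguishing_number G \<Omega> \<le> card (c ` \<Omega>)"
  using distinguishing_number_le[OF is_partition_colour_classes _ distinguishes_colour_classes[OF assms(3)]]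
    assms(1,2) by (simp add: card_colour_classes card_gt_0_iff)

definition part_of :: "'a set set \<Rightarrow> 'a \<Rightarrow> 'a set" where
  "part_of P x = (THE B. B \<in> P \<and> x \<in> B)"

lemma part_of_eq:
  assumes "is_partition P \<Omega>" and "B \<in> P" and "x \<in> B"
  shows "part_of P x = B"
  unfolding part_of_def
  by (rule the_equality) (use assms in \<open>auto simp: is_partition_def\<close>)

lemma part_of_in_partition_and_mem:
  assumes "is_partition P \<Omega>" and "x \<in> \<Omega>"
  shows "part_of P x \<in> P \<and> x \<in> part_of P x"
proof -
  obtain B where "B \<in> P" "x \<in> B"
    using assms unfolding is_partition_def by blast
  then show ?thesis
    using part_of_eq[OF assms(1)] by simp
qed

lemma part_of_in_partition: "is_partition P \<Omega> \<Longrightarrow> x \<in> \<Omega> \<Longrightarrow> part_of P x \<in> P"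
  using part_of_in_partition_and_mem[of P \<Omega> x] by simp

lemma mem_part_of: "is_partition P \<Omega> \<Longrightarrow> x \<in> \<Omega> \<Longrightarrow> x \<in> part_of P x"
  using part_of_in_partition_and_mem[of P \<Omega> x] by simp

lemma part_of_image:
  assumes "invariant_partition G \<Sigma> \<Omega>" and "g \<in> G" and "x \<in> \<Omega>"
  shows "part_of \<Sigma> (g x) = g ` part_of \<Sigma> x"
proof -
  have "is_partition \<Sigma> \<Omega>" and "g ` part_of \<Sigma> x \<in> \<Sigma>"
    using assms part_of_in_partition[of \<Sigma> \<Omega> x] unfolding invariant_partition_def by simp_all
  moreover have "g x \<in> g ` part_of \<Sigma> x"
    using mem_part_of[OF \<open>is_partition \<Sigma> \<Omega>\<close> assms(3)] by (rule imageI)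
  ultimately show ?thesis
    by (rule part_of_eq)
qed

lemma inj_on_preserving_parts_fixes_parts:
  assumes part: "is_partition P A" and "finite A" and "inj_on h A"
    and preserves: "\<forall>x\<in>A. h x \<in> A \<and> part_of P (h x) = part_of P x"
  shows "\<forall>C\<in>P. h ` C = C"
proof
  fix C assume "C \<in> P"
  then have "C \<subseteq> A"
    using part unfolding is_partition_def by blast
  have "h x \<in> C" if "x \<in> C" for x
  proof -
    have "part_of P (h x) = C"
      using preserves part_of_eq[OF part \<open>C \<in> P\<close> that] that \<open>C \<subseteq> A\<close> by auto
    then show ?thesis
      using mem_part_of[OF part] preserves that \<open>C \<subseteq> A\<close> by auto
  qed
  then show "h ` C = C"
    using \<open>C \<subseteq> A\<close> \<open>finite A\<close> \<open>inj_on h A\<close>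
    by (intro endo_inj_surj) (auto intro: finite_subset inj_on_subset)
qed

definition block_action :: "('a \<Rightarrow> 'a) \<Rightarrow> 'a set set \<Rightarrow> 'a set \<Rightarrow> 'a set" where
  "block_action g \<Sigma> B = (if B \<in> \<Sigma> then g ` B else B)"

lemma induced_group_eq: "induced_group G \<Sigma> = (\<lambda>g. block_action g \<Sigma>) ` G"
  unfolding induced_group_def block_action_def ..

lemma distinguishes_singletons_induced_group:
  "distinguishes (induced_group G \<Sigma>) ((\<lambda>B. {B}) ` \<Sigma>)"
  unfolding distinguishes_def induced_group_eq block_action_def by (auto simp: fun_eq_iff)

lemma induced_colouring_fixes_blocks:
  assumes pg: "perm_group G \<Omega>" and ip: "invariant_partition G \<Sigma> \<Omega>" and "finite \<Sigma>"
    and P: "is_partition P \<Sigma>" "distinguishes (induced_group G \<Sigma>) P"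
    and "g \<in> G" and preserves: "\<forall>\<sigma>\<in>\<Sigma>. part_of P (g ` \<sigma>) = part_of P \<sigma>"
  shows "\<forall>\<sigma>\<in>\<Sigma>. g ` \<sigma> = \<sigma>"
proof -
  let ?h = "block_action g \<Sigma>"
  have maps_to: "\<forall>\<sigma>\<in>\<Sigma>. ?h \<sigma> \<in> \<Sigma> \<and> part_of P (?h \<sigma>) = part_of P \<sigma>"
    using ip preserves \<open>g \<in> G\<close> unfolding invariant_partition_def block_action_def by simp
  have "inj_on ?h \<Sigma>"
    using perm_group_inj[OF pg \<open>g \<in> G\<close>]
    by (auto simp: inj_on_def block_action_def inj_image_eq_iff)
  then have "\<forall>C\<in>P. ?h ` C = C"
    using inj_on_preserving_parts_fixes_parts[OF P(1) \<open>finite \<Sigma>\<close>] maps_to by blast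
  moreover have "?h \<in> induced_group G \<Sigma>"
    using \<open>g \<in> G\<close> unfolding induced_group_eq by (rule imageI)
  ultimately have "?h = id"
    using P(2) unfolding distinguishes_def by blast
  then have "block_action g \<Sigma> \<sigma> = \<sigma>" for \<sigma>
    by simp
  then show ?thesis
    unfolding block_action_def by (metis (full_types))
qed

lemma lifted_colouring_distinguishing:
  assumes sp: "semiprimitive G \<Omega>" and ip: "invariant_partition G \<Sigma> \<Omega>" and "card \<Sigma> > 1"
    and \<kappa>: "\<forall>g\<in>G. (\<forall>\<sigma>\<in>\<Sigma>. \<kappa> (g ` \<sigma>) = \<kappa> \<sigma>) \<longrightarrow> (\<forall>\<sigma>\<in>\<Sigma>. g ` \<sigma> = \<sigma>)"
    and "\<sigma>\<^sub>0 \<in> \<Sigma>" and "\<alpha> \<in> \<sigma>\<^sub>0" and "\<beta> \<in> \<sigma>\<^sub>0" and "\<alpha> \<noteq> \<beta>" and "\<gamma> \<noteq> \<kappa> \<sigma>\<^sub>0"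
  shows "distinguishing_colouring G \<Omega> (\<lambda>x. if x = \<alpha> then \<gamma> else \<kappa> (part_of \<Sigma> x))"
    (is "distinguishing_colouring G \<Omega> ?c")
  unfolding distinguishing_colouring_def
proof (intro ballI impI)
  fix g assume "g \<in> G" and preserves: "\<forall>x\<in>\<Omega>. ?c (g x) = ?c x"
  have part: "is_partition \<Sigma> \<Omega>"
    using ip unfolding invariant_partition_def by blast
  have "inj g"
    using sp \<open>g \<in> G\<close> perm_group_inj unfolding semiprimitive_def by blast
  have "\<alpha> \<in> \<Omega>" "\<beta> \<in> \<Omega>"
    using part \<open>\<sigma>\<^sub>0 \<in> \<Sigma>\<close> \<open>\<alpha> \<in> \<sigma>\<^sub>0\<close> \<open>\<beta> \<in> \<sigma>\<^sub>0\<close> unfolding is_partition_def by blast+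
  have \<sigma>\<^sub>0: "part_of \<Sigma> \<alpha> = \<sigma>\<^sub>0" "part_of \<Sigma> \<beta> = \<sigma>\<^sub>0"
    using part_of_eq[OF part \<open>\<sigma>\<^sub>0 \<in> \<Sigma>\<close>] \<open>\<alpha> \<in> \<sigma>\<^sub>0\<close> \<open>\<beta> \<in> \<sigma>\<^sub>0\<close> by blast+
  have recolour: "\<kappa> (g ` part_of \<Sigma> a) = \<kappa> (part_of \<Sigma> a)"
    if "a \<in> \<Omega>" "a \<noteq> \<alpha>" "g a \<noteq> \<alpha>" for a
    using preserves that part_of_image[OF ip \<open>g \<in> G\<close> \<open>a \<in> \<Omega>\<close>] by force
  have "g \<beta> \<noteq> \<alpha>"
    using preserves \<open>\<beta> \<in> \<Omega>\<close> \<open>\<alpha> \<noteq> \<beta>\<close> \<open>\<gamma> \<noteq> \<kappa> \<sigma>\<^sub>0\<close> \<sigma>\<^sub>0(2) by force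
  then have "\<kappa> (g ` \<sigma>\<^sub>0) = \<kappa> \<sigma>\<^sub>0"
    using recolour[OF \<open>\<beta> \<in> \<Omega>\<close>] \<open>\<alpha> \<noteq> \<beta>\<close> \<sigma>\<^sub>0(2) by metis
  then have fixes_\<alpha>: "g \<alpha> = \<alpha>"
    using preserves \<open>\<alpha> \<in> \<Omega>\<close> \<open>\<gamma> \<noteq> \<kappa> \<sigma>\<^sub>0\<close> part_of_image[OF ip \<open>g \<in> G\<close> \<open>\<alpha> \<in> \<Omega>\<close>] \<sigma>\<^sub>0(1)
    by (metis (full_types))
  have "\<kappa> (g ` \<sigma>) = \<kappa> \<sigma>" if "\<sigma> \<in> \<Sigma>" for \<sigma>
  proof -
    obtain a where "a \<in> \<sigma>" "a \<noteq> \<alpha>"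
      using part \<open>\<sigma> \<in> \<Sigma>\<close> \<open>\<beta> \<in> \<sigma>\<^sub>0\<close> \<open>\<alpha> \<noteq> \<beta>\<close> \<sigma>\<^sub>0 part_of_eq[OF part \<open>\<sigma> \<in> \<Sigma>\<close>]
      unfolding is_partition_def by (metis all_not_in_conv)
    moreover have "a \<in> \<Omega>"
      using part \<open>\<sigma> \<in> \<Sigma>\<close> \<open>a \<in> \<sigma>\<close> unfolding is_partition_def by blast
    moreover have "g a \<noteq> \<alpha>"
      using fixes_\<alpha> \<open>inj g\<close> \<open>a \<noteq> \<alpha>\<close> by (metis injD)
    ultimately show ?thesis
      using recolour part_of_eq[OF part \<open>\<sigma> \<in> \<Sigma>\<close>] by metis
  qed
  then have "\<forall>\<sigma>\<in>\<Sigma>. g ` \<sigma> = \<sigma>"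
    using \<kappa> \<open>g \<in> G\<close> by blast
  then show "g = id"
    using semiprimitive_fixes_blocks_and_point_eq_id[OF sp ip \<open>card \<Sigma> > 1\<close> \<open>g \<in> G\<close>]
      \<open>\<alpha> \<in> \<Omega>\<close> fixes_\<alpha> by blast
qed

lemma two_points_in_nontrivial_block:
  assumes "finite \<Omega>" and "is_partition \<Sigma> \<Omega>" and "nontrivial_partition \<Sigma>"
  obtains \<sigma> \<alpha> \<beta> where "\<sigma> \<in> \<Sigma>" "\<alpha> \<in> \<sigma>" "\<beta> \<in> \<sigma>" "\<alpha> \<noteq> \<beta>"
proof -
  obtain \<sigma> where "\<sigma> \<in> \<Sigma>" "card \<sigma> \<noteq> 1"
    using assms(3) unfolding nontrivial_partition_def by blast
  moreover have "\<sigma> \<noteq> {}" "finite \<sigma>"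
    using assms(1,2) \<open>\<sigma> \<in> \<Sigma>\<close> unfolding is_partition_def by (auto intro: finite_subset)
  ultimately have "\<not> card \<sigma> \<le> Suc 0"
    by (simp add: le_Suc_eq)
  then show thesis
    using that \<open>\<sigma> \<in> \<Sigma>\<close> card_le_Suc0_iff_eq[OF \<open>finite \<sigma>\<close>] by blast
qed

lemma distinguishing_number_le_induced_group:
  assumes fin: "finite \<Omega>" and sp: "semiprimitive G \<Omega>" and ip: "invariant_partition G \<Sigma> \<Omega>"
    and nt: "nontrivial_partition \<Sigma>"
  shows "distinguishing_number G \<Omega> \<le> distinguishing_number (induced_group G \<Sigma>) \<Sigma>"
proof -
  have pg: "perm_group G \<Omega>" and part: "is_partition \<Sigma> \<Omega>" and "card \<Sigma> > 1"
    using sp ip nt unfolding semiprimitive_def invariant_partition_def nontrivial_partition_def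
    by blast+
  then have "finite \<Sigma>"
    using card.infinite by fastforce
  have "is_partition ((\<lambda>B. {B}) ` \<Sigma>) \<Sigma>" and "card ((\<lambda>B. {B}) ` \<Sigma>) > 0"
    using \<open>card \<Sigma> > 1\<close> unfolding is_partition_def by (auto simp: card_image)
  then obtain P where P: "is_partition P \<Sigma>" "card P = distinguishing_number (induced_group G \<Sigma>) \<Sigma>"
    "card P > 0" "distinguishes (induced_group G \<Sigma>) P"
    using distinguishing_number_attained distinguishes_singletons_induced_group by metis
  let ?\<kappa> = "part_of P"
  have \<kappa>: "\<forall>g\<in>G. (\<forall>\<sigma>\<in>\<Sigma>. ?\<kappa> (g ` \<sigma>) = ?\<kappa> \<sigma>) \<longrightarrow> (\<forall>\<sigma>\<in>\<Sigma>. g ` \<sigma> = \<sigma>)"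
    using induced_colouring_fixes_blocks[OF pg ip \<open>finite \<Sigma>\<close> P(1,4)] by blast
  obtain \<sigma>\<^sub>0 \<alpha> \<beta> where \<sigma>\<^sub>0: "\<sigma>\<^sub>0 \<in> \<Sigma>" "\<alpha> \<in> \<sigma>\<^sub>0" "\<beta> \<in> \<sigma>\<^sub>0" "\<alpha> \<noteq> \<beta>"
    using two_points_in_nontrivial_block[OF fin part nt] .
  obtain \<tau> where "\<tau> \<in> \<Sigma>" "?\<kappa> \<tau> \<noteq> ?\<kappa> \<sigma>\<^sub>0"
  proof (rule ccontr)
    assume "\<not> thesis"
    then have "\<forall>\<tau>\<in>\<Sigma>. ?\<kappa> \<tau> = ?\<kappa> \<sigma>\<^sub>0"
      using that by blast
    moreover obtain g B where "g \<in> G" "B \<in> \<Sigma>" "g ` B \<noteq> B"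
      using transitive_moves_block sp part \<open>card \<Sigma> > 1\<close> unfolding semiprimitive_def by metis
    ultimately show False
      using \<kappa> ip unfolding invariant_partition_def by metis
  qed
  let ?c = "\<lambda>x. if x = \<alpha> then ?\<kappa> \<tau> else ?\<kappa> (part_of \<Sigma> x)"
  have "distinguishing_colouring G \<Omega> ?c"
    using lifted_colouring_distinguishing[OF sp ip \<open>card \<Sigma> > 1\<close> \<kappa> \<sigma>\<^sub>0] \<open>?\<kappa> \<tau> \<noteq> ?\<kappa> \<sigma>\<^sub>0\<close> by blast
  moreover have "?c ` \<Omega> \<subseteq> P"
    using part_of_in_partition[OF P(1)] part_of_in_partition[OF part] \<open>\<tau> \<in> \<Sigma>\<close> by auto
  moreover have "finite P" "\<Omega> \<noteq> {}"
    using P(3) part \<sigma>\<^sub>0 unfolding is_partition_def by (auto simp: card_gt_0_iff)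
  ultimately have "distinguishing_number G \<Omega> \<le> card (?c ` \<Omega>)"
    by (intro distinguishing_number_le_card_colours) (auto intro: finite_subset)
  also have "\<dots> \<le> card P"
    using card_mono[OF \<open>finite P\<close> \<open>?c ` \<Omega> \<subseteq> P\<close>] .
  finally show ?thesis
    using P(2) by simp
qed

lemma Int_Union_of_subsets_of_parts:
  assumes "is_partition \<Sigma> \<Omega>" and "\<sigma> \<in> \<Sigma>" and "\<forall>\<tau>\<in>\<Sigma>. A \<tau> \<subseteq> \<tau>"
  shows "\<sigma> \<inter> \<Union>(A ` \<Sigma>) = A \<sigma>"
proof
  show "A \<sigma> \<subseteq> \<sigma> \<inter> \<Union>(A ` \<Sigma>)"
    using assms(2,3) by blast
  show "\<sigma> \<inter> \<Union>(A ` \<Sigma>) \<subseteq> A \<sigma>"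
  proof
    fix x assume "x \<in> \<sigma> \<inter> \<Union>(A ` \<Sigma>)"
    then obtain \<tau> where "\<tau> \<in> \<Sigma>" "x \<in> A \<tau>" "x \<in> \<sigma>"
      by blast
    then have "\<tau> = \<sigma>"
      using is_partition_eqI[OF assms(1)] assms(2,3) by blast
    with \<open>x \<in> A \<tau>\<close> show "x \<in> A \<sigma>"
      by simp
  qed
qed

lemma subset_meeting_blocks_in_distinct_sizes:
  assumes "is_partition \<Sigma> \<Omega>" and "card \<Sigma> > 1" and big: "\<forall>\<sigma>\<in>\<Sigma>. card \<sigma> \<ge> card \<Sigma> - 1"
  obtains X \<sigma>\<^sub>1 where "X \<subseteq> \<Omega>" "inj_on (\<lambda>\<sigma>. card (\<sigma> \<inter> X)) \<Sigma>" "\<sigma>\<^sub>1 \<in> \<Sigma>" "card (\<sigma>\<^sub>1 \<inter> X) = 1"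
proof -
  have "finite \<Sigma>"
    using \<open>card \<Sigma> > 1\<close> card.infinite by fastforce
  then obtain idx where idx: "bij_betw idx \<Sigma> {0..<card \<Sigma>}"
    using ex_bij_betw_finite_nat by blast
  have "\<exists>A. A \<subseteq> \<sigma> \<and> card A = idx \<sigma>" if "\<sigma> \<in> \<Sigma>" for \<sigma>
  proof -
    have "idx \<sigma> < card \<Sigma>"
      using idx that unfolding bij_betw_def by auto
    then have "idx \<sigma> \<le> card \<sigma>"
      using big that by fastforce
    then show ?thesis
      by (meson obtain_subset_with_card_n)
  qed
  then obtain A where A: "\<forall>\<sigma>\<in>\<Sigma>. A \<sigma> \<subseteq> \<sigma> \<and> card (A \<sigma>) = idx \<sigma>"
    by metis
  define X where "X = \<Union>(A ` \<Sigma>)"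
  have card_Int: "card (\<sigma> \<inter> X) = idx \<sigma>" if "\<sigma> \<in> \<Sigma>" for \<sigma>
    using Int_Union_of_subsets_of_parts[OF assms(1) that] A that unfolding X_def by simp
  have "X \<subseteq> \<Omega>"
    using A assms(1) unfolding X_def is_partition_def by blast
  moreover have "inj_on (\<lambda>\<sigma>. card (\<sigma> \<inter> X)) \<Sigma>"
    using idx card_Int unfolding bij_betw_def inj_on_def by simp
  moreover obtain \<sigma>\<^sub>1 where "\<sigma>\<^sub>1 \<in> \<Sigma>" "idx \<sigma>\<^sub>1 = 1"
    using idx \<open>card \<Sigma> > 1\<close> unfolding bij_betw_def by (metis atLeastLessThan_iff imageE zero_le)
  ultimately show thesis
    using that card_Int by metis
qed

lemma membership_colouring_distinguishing:
  assumes sp: "semiprimitive G \<Omega>" and ip: "invariant_partition G \<Sigma> \<Omega>" and "card \<Sigma> > 1"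
    and sizes: "inj_on (\<lambda>\<sigma>. card (\<sigma> \<inter> X)) \<Sigma>" and "\<sigma>\<^sub>1 \<in> \<Sigma>" and "card (\<sigma>\<^sub>1 \<inter> X) = 1"
  shows "distinguishing_colouring G \<Omega> (\<lambda>x. x \<in> X)"
  unfolding distinguishing_colouring_def
proof (intro ballI impI)
  fix g assume "g \<in> G" and preserves: "\<forall>x\<in>\<Omega>. (g x \<in> X) = (x \<in> X)"
  have part: "is_partition \<Sigma> \<Omega>" and maps: "\<forall>\<sigma>\<in>\<Sigma>. g ` \<sigma> \<in> \<Sigma>"
    using ip \<open>g \<in> G\<close> unfolding invariant_partition_def by blast+
  have "inj g"
    using sp \<open>g \<in> G\<close> perm_group_inj unfolding semiprimitive_def by blast
  have image_Int: "g ` \<sigma> \<inter> X = g ` (\<sigma> \<inter> X)" if "\<sigma> \<in> \<Sigma>" for \<sigma>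
    using preserves part that unfolding is_partition_def by blast
  have fixes_blocks: "\<forall>\<sigma>\<in>\<Sigma>. g ` \<sigma> = \<sigma>"
  proof
    fix \<sigma> assume "\<sigma> \<in> \<Sigma>"
    have "card (g ` \<sigma> \<inter> X) = card (\<sigma> \<inter> X)"
      using image_Int[OF \<open>\<sigma> \<in> \<Sigma>\<close>] card_image[OF inj_on_subset[OF \<open>inj g\<close>]] by simp
    then show "g ` \<sigma> = \<sigma>"
      using sizes maps \<open>\<sigma> \<in> \<Sigma>\<close> unfolding inj_on_def by blast
  qed
  obtain a where a: "\<sigma>\<^sub>1 \<inter> X = {a}"
    using \<open>card (\<sigma>\<^sub>1 \<inter> X) = 1\<close> by (rule card_1_singletonE)
  then have "g ` {a} = {a}"
    using image_Int[OF \<open>\<sigma>\<^sub>1 \<in> \<Sigma>\<close>] fixes_blocks \<open>\<sigma>\<^sub>1 \<in> \<Sigma>\<close> by simp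
  moreover have "a \<in> \<Omega>"
    using a part \<open>\<sigma>\<^sub>1 \<in> \<Sigma>\<close> unfolding is_partition_def by blast
  ultimately show "g = id"
    using semiprimitive_fixes_blocks_and_point_eq_id[OF sp ip \<open>card \<Sigma> > 1\<close> \<open>g \<in> G\<close> fixes_blocks]
    by simp
qed

lemma distinguishing_number_eq_2_if_large_blocks:
  assumes fin: "finite \<Omega>" and sp: "semiprimitive G \<Omega>" and ip: "invariant_partition G \<Sigma> \<Omega>"
    and nt: "nontrivial_partition \<Sigma>" and big: "\<forall>\<sigma>\<in>\<Sigma>. card \<sigma> \<ge> card \<Sigma> - 1"
  shows "distinguishing_number G \<Omega> = 2"
proof -
  have pg: "perm_group G \<Omega>" and part: "is_partition \<Sigma> \<Omega>" and "card \<Sigma> > 1"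
    using sp ip nt unfolding semiprimitive_def invariant_partition_def nontrivial_partition_def
    by blast+
  obtain X \<sigma>\<^sub>1 where "inj_on (\<lambda>\<sigma>. card (\<sigma> \<inter> X)) \<Sigma>" "\<sigma>\<^sub>1 \<in> \<Sigma>" "card (\<sigma>\<^sub>1 \<inter> X) = 1"
    using subset_meeting_blocks_in_distinct_sizes[OF part \<open>card \<Sigma> > 1\<close> big] by metis
  then have colouring: "distinguishing_colouring G \<Omega> (\<lambda>x. x \<in> X)"
    using membership_colouring_distinguishing[OF sp ip \<open>card \<Sigma> > 1\<close>] by blast
  have "\<Omega> \<noteq> {}"
    using part \<open>\<sigma>\<^sub>1 \<in> \<Sigma>\<close> unfolding is_partition_def by blast
  have "distinguishing_number G \<Omega> \<le> card ((\<lambda>x. x \<in> X) ` \<Omega>)"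
    using distinguishing_number_le_card_colours[OF \<open>\<Omega> \<noteq> {}\<close> _ colouring] by simp
  also have "\<dots> \<le> 2"
    using card_mono[of UNIV "(\<lambda>x. x \<in> X) ` \<Omega>"] by simp
  finally have "distinguishing_number G \<Omega> \<le> 2" .
  moreover have "2 \<le> distinguishing_number G \<Omega>"
  proof -
    obtain g B where "g \<in> G" "B \<in> \<Sigma>" "g ` B \<noteq> B"
      using transitive_moves_block sp part \<open>card \<Sigma> > 1\<close> unfolding semiprimitive_def by metis
    moreover have "\<forall>h\<in>G. h ` \<Omega> = \<Omega>"
      using perm_group_permutes[OF pg] permutes_image by blast
    moreover have "card (colour_classes (\<lambda>x. x \<in> X) \<Omega>) > 0"
      using \<open>\<Omega> \<noteq> {}\<close> by (simp add: card_colour_classes card_gt_0_iff)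
    ultimately show ?thesis
      using distinguishing_number_ge_2[OF is_partition_colour_classes _
          distinguishes_colour_classes[OF colouring]] by force
  qed
  ultimately show ?thesis
    by simp
qed

theorem lemma2p2:
  fixes G :: "('a \<Rightarrow> 'a) set" and \<Omega> :: "'a set" and \<Sigma> :: "'a set set"
  assumes "finite \<Omega>"
    and "semiprimitive G \<Omega>"
    and "invariant_partition G \<Sigma> \<Omega>"
    and "nontrivial_partition \<Sigma>"
  shows "distinguishing_number G \<Omega> \<le> distinguishing_number (induced_group G \<Sigma>) \<Sigma> \<and>
         ((\<forall>\<sigma>\<in>\<Sigma>. card \<sigma> \<ge> card \<Sigma> - 1) \<longrightarrow> distinguishing_number G \<Omega> = 2)"
  using distinguishing_number_le_induced_group[OF assms]
    distinguishing_number_eq_2_if_large_blocks[OF assms] by blast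

end
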